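(* For $(F,t)\in U$, let $Y=Y_{F,t}$. Then for $i=1,2$ the cone $\hat C_i$ over $C_i$ with vertex $p_0=[0,\dots,0,1]$ is contained in $Y$.
   Context: $U=U_0\times\mathbb{A}^1$, where $U_0$ is the space of cubic forms $F(x_0,\dots,x_3)$ such that the curve cut out by $F$ on the quadric $x_0x_3=x_1x_2$ in $\mathbb{P}^3$ is smooth, avoids $[0,0,0,1]$, and is tangent with multiplicity $2$ to the lines $x_0=x_1=0$ and $x_0=x_2=0$. $Y_{F,t}\subset\mathbb{P}^5$ is the cubic fourfold $x_4^3-F(x_0,\dots,x_3)+x_5(x_0x_3-x_1x_2)+t\,x_0x_5^2=0$. $C_i\subset\mathbb{P}^5$ is the plane cubic $(x_0=x_i=x_5=0)\cap(x_4^3=F(x_0,\dots,x_3))$. *)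

theory Defs
  imports Complex_Main
begin

text \<open>Points of affine space C^{n+1} are represented as functions nat => complex;
 only the coordinates 0..n are relevant.  A cubic form in x0..x3 is given by its
 coefficient function on the monomials x0^a x1^b x2^c x3^d with a+b+c+d = 3.\<close>

type_synonym cubic_coeffs = "nat \<times> nat \<times> nat \<times> nat \<Rightarrow> complex"

definition monos3 :: "(nat \<times> nat \<times> nat \<times> nat) set" where
  "monos3 = {(a,b,c,d). a + b + c + d = 3}"

definition cubic_eval :: "cubic_coeffs \<Rightarrow> (nat \<Rightarrow> complex) \<Rightarrow> complex" where
  "cubic_eval F x = (\<Sum>(a,b,c,d)\<in>monos3. F (a,b,c,d) * x 0 ^ a * x 1 ^ b * x 2 ^ c * x 3 ^ d)"

definition cubic_partial :: "cubic_coeffs \<Rightarrow> nat \<Rightarrow> (nat \<Rightarrow> complex) \<Rightarrow> complex" where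
  "cubic_partial F j x = (\<Sum>(a,b,c,d)\<in>monos3.
      (let e = (\<lambda>k. if k = 0 then a else if k = 1 then b else if k = 2 then c else d) in
       F (a,b,c,d) * of_nat (e j) *
       (\<Prod>k\<in>{0..3::nat}. x k ^ (if k = j then e k - 1 else e k))))"

definition quadric :: "(nat \<Rightarrow> complex) \<Rightarrow> complex" where
  "quadric x = x 0 * x 3 - x 1 * x 2"

definition quadric_partial :: "nat \<Rightarrow> (nat \<Rightarrow> complex) \<Rightarrow> complex" where
  "quadric_partial j x = (if j = 0 then x 3 else if j = 1 then - x 2
                          else if j = 2 then - x 1 else x 0)"

definition nonzero_vec :: "nat \<Rightarrow> (nat \<Rightarrow> complex) \<Rightarrow> bool" where
  "nonzero_vec n x \<longleftrightarrow> (\<exists>j\<le>n. x j \<noteq> 0)"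

text \<open>The curve {F = 0} \<inter> {q = 0} in P^3 is smooth: at every point of it the
 gradients of F and q are linearly independent (grad q never vanishes at a nonzero point).\<close>
definition smooth_on_quadric :: "cubic_coeffs \<Rightarrow> bool" where
  "smooth_on_quadric F \<longleftrightarrow>
     (\<forall>x. nonzero_vec 3 x \<and> cubic_eval F x = 0 \<and> quadric x = 0 \<longrightarrow>
        \<not> (\<exists>r. \<forall>j\<le>3. cubic_partial F j x = r * quadric_partial j x))"

definition binary_cubic_double_root :: "(complex \<Rightarrow> complex \<Rightarrow> complex) \<Rightarrow> bool" where
  "binary_cubic_double_root G \<longleftrightarrow>
     (\<exists>a b l1 l2. (a, b) \<noteq> (0, 0) \<and> l1 * a + l2 * b \<noteq> 0 \<and>
        (\<forall>s u. G s u = (b * s - a * u)^2 * (l1 * s + l2 * u)))"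

definition vec4 :: "complex \<Rightarrow> complex \<Rightarrow> complex \<Rightarrow> complex \<Rightarrow> nat \<Rightarrow> complex" where
  "vec4 y0 y1 y2 y3 = (\<lambda>k. if k = 0 then y0 else if k = 1 then y1 else if k = 2 then y2 else y3)"

definition U0 :: "cubic_coeffs set" where
  "U0 = {F. smooth_on_quadric F
          \<and> cubic_eval F (vec4 0 0 0 1) \<noteq> 0
          \<and> binary_cubic_double_root (\<lambda>s u. cubic_eval F (vec4 0 0 s u))
          \<and> binary_cubic_double_root (\<lambda>s u. cubic_eval F (vec4 0 s 0 u))}"

definition Y_eq :: "cubic_coeffs \<Rightarrow> complex \<Rightarrow> (nat \<Rightarrow> complex) \<Rightarrow> complex" where
  "Y_eq F t x = x 4 ^ 3 - cubic_eval F x + x 5 * (x 0 * x 3 - x 1 * x 2) + t * x 0 * x 5 ^ 2"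

definition Y_set :: "cubic_coeffs \<Rightarrow> complex \<Rightarrow> (nat \<Rightarrow> complex) set" where
  "Y_set F t = {x. nonzero_vec 5 x \<and> Y_eq F t x = 0}"

definition C_set :: "cubic_coeffs \<Rightarrow> nat \<Rightarrow> (nat \<Rightarrow> complex) set" where
  "C_set F i = {y. nonzero_vec 5 y \<and> y 0 = 0 \<and> y i = 0 \<and> y 5 = 0 \<and> y 4 ^ 3 = cubic_eval F y}"

definition p0 :: "nat \<Rightarrow> complex" where
  "p0 = (\<lambda>k. if k = 5 then 1 else 0)"

definition cone_set :: "cubic_coeffs \<Rightarrow> nat \<Rightarrow> (nat \<Rightarrow> complex) set" where
  "cone_set F i = {v. nonzero_vec 5 v \<and>
      (\<exists>y r m. y \<in> C_set F i \<and> v = (\<lambda>k. r * y k + m * p0 k))}"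

end

theory Submission
  imports Defs
begin

text \<open>The vertex p0 only moves the coordinate x5, the cubic form F sees only x0..x3, and on
 the planes x0 = x1 = 0 and x0 = x2 = 0 the terms involving x5 in the equation of Y vanish.
 Hence on the cone the equation of Y reduces to the cubic-homogeneous relation
 x4^3 = F(x0, ..., x3), which holds on C_i and is preserved by scaling.\<close>

lemma cubic_eval_cong:
  assumes "\<And>k. k \<le> 3 \<Longrightarrow> v k = w k"
  shows "cubic_eval F v = cubic_eval F w"
  unfolding cubic_eval_def using assms by simp

lemma cubic_eval_scale:
  "cubic_eval F (\<lambda>k. r * y k) = r ^ 3 * cubic_eval F y"
proof -
  have "F (a,b,c,d) * (r * y 0) ^ a * (r * y 1) ^ b * (r * y 2) ^ c * (r * y 3) ^ d =
        r ^ 3 * (F (a,b,c,d) * y 0 ^ a * y 1 ^ b * y 2 ^ c * y 3 ^ d)"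
    if "(a,b,c,d) \<in> monos3" for a b c d
  proof -
    have "r ^ 3 = r ^ a * r ^ b * r ^ c * r ^ d"
      using that unfolding monos3_def by (simp flip: power_add)
    then show ?thesis by (simp add: power_mult_distrib)
  qed
  then show ?thesis
    unfolding cubic_eval_def sum_distrib_left by (intro sum.cong) auto
qed

lemma Y_eq_on_coordinate_planes:
  assumes "x 0 = 0" and "x 1 * x 2 = 0"
  shows "Y_eq F t x = x 4 ^ 3 - cubic_eval F x"
  using assms unfolding Y_eq_def by simp

lemma Y_eq_cone_point:
  assumes "y \<in> C_set F i" and "i \<in> {1, 2}"
  shows "Y_eq F t (\<lambda>k. r * y k + m * p0 k) = 0"
proof -
  let ?v = "\<lambda>k. r * y k + m * p0 k"
  have y: "y 0 = 0" "y i = 0" "y 4 ^ 3 = cubic_eval F y"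
    using assms(1) unfolding C_set_def by auto
  have "cubic_eval F ?v = cubic_eval F (\<lambda>k. r * y k)"
    by (rule cubic_eval_cong) (simp add: p0_def)
  also have "\<dots> = r ^ 3 * cubic_eval F y"
    by (rule cubic_eval_scale)
  finally have F_v: "cubic_eval F ?v = (r * y 4) ^ 3"
    using y(3) by (simp add: power_mult_distrib)
  have "Y_eq F t ?v = ?v 4 ^ 3 - cubic_eval F ?v"
    using y(1,2) assms(2) by (intro Y_eq_on_coordinate_planes) (auto simp: p0_def)
  also have "\<dots> = 0"
    using F_v by (simp add: p0_def)
  finally show ?thesis .
qed

theorem lemma5p3:
  fixes F :: cubic_coeffs and t :: complex and i :: nat
  assumes "F \<in> U0" and "i \<in> {1, 2}"
  shows "cone_set F i \<subseteq> Y_set F t"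
proof
  fix v assume "v \<in> cone_set F i"
  then obtain y r m where "nonzero_vec 5 v" and "y \<in> C_set F i"
    and "v = (\<lambda>k. r * y k + m * p0 k)"
    unfolding cone_set_def by blast
  with assms(2) show "v \<in> Y_set F t"
    unfolding Y_set_def by (simp add: Y_eq_cone_point)
qed

end
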